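(* Let $C\subseteq\mathbb{R}^n$ be a full-dimensional closed convex cone with lineality space $L$, and let $S\subseteq\mathbb{R}^n$ be closed. Then $C$ is maximal $S$-free if and only if $C\cap L^\perp$ is maximal $\operatorname{cl}(\operatorname{proj}_{L^\perp}S)$-free (as a subset of the space $L^\perp$).
   Context: A convex set $C$ is $S$-free if $\operatorname{int}(C)\cap S=\emptyset$ and maximal $S$-free if it is $S$-free and no $S$-free convex set strictly contains it; for subsets of the subspace $L^\perp$, interiors are taken relative to $L^\perp$ and competing convex sets are subsets of $L^\perp$. $\operatorname{proj}_{L^\perp}$ is the orthogonal projection onto $L^\perp$ and $\operatorname{cl}$ denotes closure. *)

theory Defs
  imports "HOL-Analysis.Analysis"
begin

definition lineality_space :: "'a::real_vector set \<Rightarrow> 'a set" where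
  "lineality_space C = {d. \<forall>x\<in>C. \<forall>t::real. x + t *\<^sub>R d \<in> C}"

definition proj_onto :: "'a::real_inner set \<Rightarrow> 'a \<Rightarrow> 'a" where
  "proj_onto V x = (THE y. y \<in> V \<and> (\<forall>v\<in>V. (x - y) \<bullet> v = 0))"

definition S_free :: "'a::real_normed_vector set \<Rightarrow> 'a set \<Rightarrow> bool" where
  "S_free S C \<longleftrightarrow> convex C \<and> interior C \<inter> S = {}"

definition maximal_S_free :: "'a::real_normed_vector set \<Rightarrow> 'a set \<Rightarrow> bool" where
  "maximal_S_free S C \<longleftrightarrow> S_free S C \<and> (\<forall>D. S_free S D \<and> C \<subseteq> D \<longrightarrow> D = C)"

definition S_free_in :: "'a::real_normed_vector set \<Rightarrow> 'a set \<Rightarrow> 'a set \<Rightarrow> bool" where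
  "S_free_in V S C \<longleftrightarrow> C \<subseteq> V \<and> convex C \<and> ((top_of_set V) interior_of C) \<inter> S = {}"

definition maximal_S_free_in :: "'a::real_normed_vector set \<Rightarrow> 'a set \<Rightarrow> 'a set \<Rightarrow> bool" where
  "maximal_S_free_in V S C \<longleftrightarrow> S_free_in V S C \<and> (\<forall>D. S_free_in V S D \<and> C \<subseteq> D \<longrightarrow> D = C)"

end

theory Submission
  imports Defs
begin

text \<open>Since C is a cone, 0 \<in> C, so C contains its lineality space L and is invariant under
  translations by L: it is the cylinder over its slice C \<inter> V, where V is the orthogonal
  complement of L. For such cylinders the orthogonal projection P onto V identifies the interior
  with the relative interior of the slice, and an open cylinder misses S iff it misses P ` S,
  iff it misses the closure of P ` S. Competitors of the slice lift to their preimages under P.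
  Conversely a competitor D of C may be replaced by its closure, which is still S-free and,
  being closed, convex and containing L, is again a cylinder, hence determined by its slice.\<close>

definition translation_invariant :: "'a::real_vector set \<Rightarrow> 'a set \<Rightarrow> bool" where
  "translation_invariant L X \<longleftrightarrow> (\<forall>x\<in>X. \<forall>l\<in>L. x + l \<in> X)"

lemma proj_onto_eqI:
  fixes V :: "'a::euclidean_space set"
  assumes "subspace V" "y \<in> V" "x - y \<in> V\<^sup>\<bottom>"
  shows "proj_onto V x = y"
  unfolding proj_onto_def
proof (rule the_equality)
  show "y \<in> V \<and> (\<forall>v\<in>V. (x - y) \<bullet> v = 0)"
    using assms by (auto simp: orthogonal_comp_def orthogonal_def inner_commute)
next
  fix z assume z: "z \<in> V \<and> (\<forall>v\<in>V. (x - z) \<bullet> v = 0)"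
  then have "x - z \<in> V\<^sup>\<bottom>"
    by (auto simp: orthogonal_comp_def orthogonal_def inner_commute)
  then have "(x - y) - (x - z) \<in> V\<^sup>\<bottom>"
    using assms(3) subspace_diff[OF subspace_orthogonal_comp] by blast
  then have "z - y \<in> V\<^sup>\<bottom>"
    by simp
  moreover have "z - y \<in> V"
    using z assms(1,2) subspace_diff by blast
  ultimately have "z - y = 0"
    using orthogonal_Int_0[OF assms(1)] by blast
  then show "z = y"
    by simp
qed

lemma proj_onto_decomp:
  fixes V :: "'a::euclidean_space set"
  assumes "subspace V"
  shows "proj_onto V x \<in> V" and "x - proj_onto V x \<in> V\<^sup>\<bottom>"
proof -
  obtain v w where "x = v + w" "v \<in> V" "w \<in> V\<^sup>\<bottom>"
    using subspace_sum_orthogonal_comp[OF assms] set_plus_elim by blast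
  then have "proj_onto V x = v"
    by (intro proj_onto_eqI assms) auto
  then show "proj_onto V x \<in> V" and "x - proj_onto V x \<in> V\<^sup>\<bottom>"
    using \<open>x = v + w\<close> \<open>v \<in> V\<close> \<open>w \<in> V\<^sup>\<bottom>\<close> by auto
qed

lemma proj_onto_id:
  fixes V :: "'a::euclidean_space set"
  shows "subspace V \<Longrightarrow> v \<in> V \<Longrightarrow> proj_onto V v = v"
  by (rule proj_onto_eqI) (auto simp: subspace_0[OF subspace_orthogonal_comp])

lemma linear_proj_onto:
  fixes V :: "'a::euclidean_space set"
  assumes V: "subspace V"
  shows "linear (proj_onto V)"
proof (rule linearI)
  note decomp = proj_onto_decomp[OF V]
  have V': "subspace (V\<^sup>\<bottom>)"
    by (rule subspace_orthogonal_comp)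
  fix x y :: 'a and c :: real
  have "(x - proj_onto V x) + (y - proj_onto V y) \<in> V\<^sup>\<bottom>"
    using decomp(2) subspace_add[OF V'] by blast
  then show "proj_onto V (x + y) = proj_onto V x + proj_onto V y"
    using decomp(1) subspace_add[OF V] by (intro proj_onto_eqI V) (auto simp: algebra_simps)
  have "c *\<^sub>R (x - proj_onto V x) \<in> V\<^sup>\<bottom>"
    using decomp(2) subspace_scale[OF V'] by blast
  then show "proj_onto V (c *\<^sub>R x) = c *\<^sub>R proj_onto V x"
    using decomp(1) subspace_scale[OF V] by (intro proj_onto_eqI V) (auto simp: algebra_simps)
qed

lemma proj_onto_orthogonal_comp_decomp:
  fixes L :: "'a::euclidean_space set"
  assumes "subspace L"
  shows "proj_onto (L\<^sup>\<bottom>) x \<in> L\<^sup>\<bottom>" and "x - proj_onto (L\<^sup>\<bottom>) x \<in> L"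
  using proj_onto_decomp[OF subspace_orthogonal_comp[of L], of x]
  by (simp_all add: orthogonal_comp_self[OF assms])

lemma proj_onto_orthogonal_comp_add:
  fixes L :: "'a::euclidean_space set"
  assumes "subspace L" "l \<in> L"
  shows "proj_onto (L\<^sup>\<bottom>) (x + l) = proj_onto (L\<^sup>\<bottom>) x"
proof (rule proj_onto_eqI[OF subspace_orthogonal_comp])
  show "proj_onto (L\<^sup>\<bottom>) x \<in> L\<^sup>\<bottom>"
    by (rule proj_onto_orthogonal_comp_decomp(1)[OF assms(1)])
  have "(x - proj_onto (L\<^sup>\<bottom>) x) + l \<in> L"
    using proj_onto_orthogonal_comp_decomp(2)[OF assms(1)] assms subspace_add by blast
  then show "x + l - proj_onto (L\<^sup>\<bottom>) x \<in> L\<^sup>\<bottom>\<^sup>\<bottom>"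
    by (simp add: orthogonal_comp_self[OF assms(1)] algebra_simps)
qed

lemma subspace_lineality_space: "subspace (lineality_space C)"
proof (rule subspaceI)
  fix x y c assume x: "x \<in> lineality_space C" and y: "y \<in> lineality_space C"
  have "(z + t *\<^sub>R x) + t *\<^sub>R y \<in> C" if "z \<in> C" for z t
    using that x y unfolding lineality_space_def by blast
  then show "x + y \<in> lineality_space C"
    unfolding lineality_space_def by (simp add: scaleR_add_right add.assoc)
  have "z + (t * c) *\<^sub>R x \<in> C" if "z \<in> C" for z t
    using that x unfolding lineality_space_def by blast
  then show "c *\<^sub>R x \<in> lineality_space C"
    unfolding lineality_space_def by simp
qed (simp add: lineality_space_def)

lemma translation_invariant_lineality_space:
  "translation_invariant (lineality_space C) C"
  unfolding translation_invariant_def lineality_space_def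
  by (metis (mono_tags, lifting) mem_Collect_eq scaleR_one)

lemma lineality_space_subset: "0 \<in> C \<Longrightarrow> lineality_space C \<subseteq> C"
  using translation_invariant_lineality_space[of C] unfolding translation_invariant_def
  by (metis add_0 subsetI)

lemma translation_invariant_closed_convex:
  fixes E :: "'a::real_normed_vector set"
  assumes "closed E" "convex E" "subspace L" "L \<subseteq> E"
  shows "translation_invariant L E"
  unfolding translation_invariant_def
proof (intro ballI)
  fix x l assume "x \<in> E" "l \<in> L"
  \<comment> \<open>x + l is the limit, as u tends to 0, of the convex combination of x and l/u
      with weight u on the latter\<close>
  have eventually_in: "\<forall>\<^sub>F u in at_right 0. (1 - u) *\<^sub>R x + l \<in> E"
  proof (rule eventually_mono[OF eventually_at_right_real[OF zero_less_one]])
    fix u :: real assume u: "u \<in> {0<..<1}"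
    then have "(1 - u) *\<^sub>R x + u *\<^sub>R (inverse u *\<^sub>R l) \<in> E"
      using \<open>x \<in> E\<close> \<open>l \<in> L\<close> assms(3,4) subspace_scale by (intro convexD[OF assms(2)]) auto
    then show "(1 - u) *\<^sub>R x + l \<in> E"
      using u by simp
  qed
  have "((\<lambda>u. (1 - u) *\<^sub>R x + l) \<longlongrightarrow> (1 - 0) *\<^sub>R x + l) (at_right (0::real))"
    by (intro tendsto_intros)
  then have "(1 - 0) *\<^sub>R x + l \<in> E"
    by (rule Lim_in_closed_set[OF assms(1) eventually_in trivial_limit_at_right_real])
  then show "x + l \<in> E" by simp
qed

lemma translation_invariant_interior:
  fixes X :: "'a::real_normed_vector set"
  assumes "translation_invariant L X"
  shows "translation_invariant L (interior X)"
  unfolding translation_invariant_def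
proof (intro ballI)
  fix x l assume "x \<in> interior X" "l \<in> L"
  then obtain e where "e > 0" "ball x e \<subseteq> X"
    by (meson mem_interior)
  have "ball (x + l) e \<subseteq> X"
  proof
    fix y assume "y \<in> ball (x + l) e"
    then have "y - l \<in> ball x e"
      by (simp add: dist_norm algebra_simps)
    then have "(y - l) + l \<in> X"
      using \<open>ball x e \<subseteq> X\<close> \<open>l \<in> L\<close> assms unfolding translation_invariant_def by blast
    then show "y \<in> X" by simp
  qed
  then show "x + l \<in> interior X"
    using \<open>e > 0\<close> by (meson mem_interior)
qed

context
  fixes L :: "'a::euclidean_space set" and P :: "'a \<Rightarrow> 'a"
  assumes L: "subspace L"
  defines "P \<equiv> proj_onto (L\<^sup>\<bottom>)"
begin

lemma proj_in_orthogonal_comp: "P x \<in> L\<^sup>\<bottom>"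
  unfolding P_def by (rule proj_onto_orthogonal_comp_decomp(1)[OF L])

lemma proj_id: "v \<in> L\<^sup>\<bottom> \<Longrightarrow> P v = v"
  unfolding P_def by (rule proj_onto_id[OF subspace_orthogonal_comp])

lemma translation_invariant_proj_mem_iff:
  assumes "translation_invariant L X"
  shows "P x \<in> X \<longleftrightarrow> x \<in> X"
proof -
  have "x - P x \<in> L"
    unfolding P_def by (rule proj_onto_orthogonal_comp_decomp(2)[OF L])
  moreover have "P x - x \<in> L"
    using subspace_neg[OF L calculation] by simp
  ultimately show ?thesis
    using assms unfolding translation_invariant_def
    by (metis add.commute diff_add_cancel)
qed

lemma translation_invariant_eq_vimage_proj:
  assumes "translation_invariant L X"
  shows "X = P -` (X \<inter> L\<^sup>\<bottom>)"
  using assms by (auto simp: translation_invariant_proj_mem_iff proj_in_orthogonal_comp)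

lemma translation_invariant_eqI:
  assumes "translation_invariant L X" "translation_invariant L Y" "X \<inter> L\<^sup>\<bottom> = Y \<inter> L\<^sup>\<bottom>"
  shows "X = Y"
  using assms translation_invariant_eq_vimage_proj by metis

lemma translation_invariant_vimage_proj: "translation_invariant L (P -` D)"
  unfolding translation_invariant_def P_def by (simp add: proj_onto_orthogonal_comp_add[OF L])

lemma interior_of_Int_orthogonal_comp:
  assumes "translation_invariant L X"
  shows "top_of_set (L\<^sup>\<bottom>) interior_of (X \<inter> L\<^sup>\<bottom>) = interior X \<inter> L\<^sup>\<bottom>"
    (is "?W = _")
proof
  have "L\<^sup>\<bottom> \<inter> interior X \<subseteq> ?W"
  proof (rule interior_of_maximal)
    show "L\<^sup>\<bottom> \<inter> interior X \<subseteq> X \<inter> L\<^sup>\<bottom>"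
      using interior_subset by blast
  qed (rule openin_open_Int[OF open_interior])
  then show "interior X \<inter> L\<^sup>\<bottom> \<subseteq> ?W"
    by (simp only: Int_commute)
next
  obtain U where "open U" and W: "?W = L\<^sup>\<bottom> \<inter> U"
    using openin_open[THEN iffD1, OF openin_interior_of] by blast
  \<comment> \<open>the cylinder over ?W is open, as P is continuous, and contained in X\<close>
  have "open (P -` U)"
    using \<open>open U\<close> linear_proj_onto[OF subspace_orthogonal_comp] unfolding P_def
    by (intro continuous_open_vimage linear_continuous_at) (auto simp: linear_conv_bounded_linear)
  moreover have "P -` U \<subseteq> P -` (X \<inter> L\<^sup>\<bottom>)"
    using W interior_of_subset[of "top_of_set (L\<^sup>\<bottom>)" "X \<inter> L\<^sup>\<bottom>"] proj_in_orthogonal_comp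
    by blast
  ultimately have "P -` U \<subseteq> interior X"
    using translation_invariant_eq_vimage_proj[OF assms] by (metis interior_maximal)
  then show "?W \<subseteq> interior X \<inter> L\<^sup>\<bottom>"
    using W proj_id by auto
qed

lemma S_free_iff_S_free_in_orthogonal_comp:
  assumes "translation_invariant L X"
  shows "S_free S X \<longleftrightarrow> S_free_in (L\<^sup>\<bottom>) (closure (P ` S)) (X \<inter> L\<^sup>\<bottom>)"
proof -
  have convex_iff: "convex X \<longleftrightarrow> convex (X \<inter> L\<^sup>\<bottom>)"
    using translation_invariant_eq_vimage_proj[OF assms] convex_linear_vimage
      linear_proj_onto[OF subspace_orthogonal_comp] subspace_imp_convex[OF subspace_orthogonal_comp]
    unfolding P_def by (metis convex_Int)
  have "closure (P ` S) \<subseteq> L\<^sup>\<bottom>"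
    using proj_in_orthogonal_comp by (intro closure_minimal closed_subspace subspace_orthogonal_comp) auto
  then have "(interior X \<inter> L\<^sup>\<bottom>) \<inter> closure (P ` S) = {} \<longleftrightarrow> interior X \<inter> P ` S = {}"
    using open_Int_closure_eq_empty[OF open_interior] by blast
  also have "\<dots> \<longleftrightarrow> interior X \<inter> S = {}"
    using translation_invariant_proj_mem_iff[OF translation_invariant_interior[OF assms]] by auto
  finally show ?thesis
    unfolding S_free_def S_free_in_def interior_of_Int_orthogonal_comp[OF assms] convex_iff by blast
qed

lemma maximal_S_free_iff_maximal_S_free_in_orthogonal_comp:
  assumes "translation_invariant L C" "L \<subseteq> C"
  shows "maximal_S_free S C \<longleftrightarrow> maximal_S_free_in (L\<^sup>\<bottom>) (closure (P ` S)) (C \<inter> L\<^sup>\<bottom>)"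
proof
  assume max: "maximal_S_free S C"
  show "maximal_S_free_in (L\<^sup>\<bottom>) (closure (P ` S)) (C \<inter> L\<^sup>\<bottom>)"
    unfolding maximal_S_free_in_def
  proof (intro conjI allI impI)
    show "S_free_in (L\<^sup>\<bottom>) (closure (P ` S)) (C \<inter> L\<^sup>\<bottom>)"
      using max S_free_iff_S_free_in_orthogonal_comp[OF assms(1)] unfolding maximal_S_free_def by blast
    fix D assume D: "S_free_in (L\<^sup>\<bottom>) (closure (P ` S)) D \<and> C \<inter> L\<^sup>\<bottom> \<subseteq> D"
    have slice: "P -` D \<inter> L\<^sup>\<bottom> = D"
      using D proj_id unfolding S_free_in_def by auto
    then have "S_free S (P -` D)"
      using D S_free_iff_S_free_in_orthogonal_comp[OF translation_invariant_vimage_proj] by simp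
    moreover have "C \<subseteq> P -` D"
      using D proj_in_orthogonal_comp translation_invariant_eq_vimage_proj[OF assms(1)] by blast
    ultimately have "P -` D = C"
      using max unfolding maximal_S_free_def by blast
    then show "D = C \<inter> L\<^sup>\<bottom>"
      using slice by simp
  qed
next
  assume max: "maximal_S_free_in (L\<^sup>\<bottom>) (closure (P ` S)) (C \<inter> L\<^sup>\<bottom>)"
  show "maximal_S_free S C"
    unfolding maximal_S_free_def
  proof (intro conjI allI impI)
    show "S_free S C"
      using max S_free_iff_S_free_in_orthogonal_comp[OF assms(1)] unfolding maximal_S_free_in_def by blast
    fix D assume D: "S_free S D \<and> C \<subseteq> D"
    then have "S_free S (closure D)"
      unfolding S_free_def by (simp add: convex_closure convex_interior_closure)
    moreover have "L \<subseteq> closure D"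
      using D assms(2) closure_subset by blast
    then have invariant: "translation_invariant L (closure D)"
      using D L unfolding S_free_def
      by (intro translation_invariant_closed_convex) (auto simp: convex_closure)
    ultimately have "S_free_in (L\<^sup>\<bottom>) (closure (P ` S)) (closure D \<inter> L\<^sup>\<bottom>)"
      using S_free_iff_S_free_in_orthogonal_comp by blast
    moreover have "C \<inter> L\<^sup>\<bottom> \<subseteq> closure D \<inter> L\<^sup>\<bottom>"
      using D closure_subset by blast
    ultimately have "closure D \<inter> L\<^sup>\<bottom> = C \<inter> L\<^sup>\<bottom>"
      using max unfolding maximal_S_free_in_def by blast
    then have "closure D = C"
      by (rule translation_invariant_eqI[OF invariant assms(1)])
    then show "D = C"
      using D closure_subset by blast
  qed
qed

end

theorem theorem6:
  fixes C S :: "'a::euclidean_space set"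
  assumes "closed C" and "convex C" and "cone C" and "interior C \<noteq> {}"
    and "closed S"
  shows "maximal_S_free S C \<longleftrightarrow>
    maximal_S_free_in ((lineality_space C)\<^sup>\<bottom>)
      (closure (proj_onto ((lineality_space C)\<^sup>\<bottom>) ` S))
      (C \<inter> (lineality_space C)\<^sup>\<bottom>)"
proof -
  have "0 \<in> C"
    using assms(3,4) cone_contains_0 interior_subset by blast
  then show ?thesis
    by (intro maximal_S_free_iff_maximal_S_free_in_orthogonal_comp subspace_lineality_space
        translation_invariant_lineality_space lineality_space_subset)
qed

end
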